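(* Let $n\in\mathbb N$ and let $A$ be a connected monounary algebra containing an $n$-element cycle. If $A\not\cong\underline n$ and $A^{(\infty)}=A$, then $\mathbf V(A)=\mathbf V(\widehat n)$.
   Context: A monounary algebra is a pair $(A,f)$ with $A$ a nonempty set and $f:A\to A$; direct products are coordinatewise. It is connected if for all $x,y$ there are $m,n\ge0$ with $f^m(x)=f^n(y)$; an $n$-element cycle is a set $\{x,f(x),\dots,f^{n-1}(x)\}$ of $n$ distinct elements with $f^n(x)=x$. A retract of $A$ is a nonempty subalgebra $M$ such that there is an endomorphism $h:A\to M$ with $h|_M=\mathrm{id}$. A retract variety is a class closed under isomorphisms, retracts and direct products; $\mathbf V(\mathcal K)$ is the smallest retract variety containing $\mathcal K$. $A^{(\infty)}$ is the set of $x\in A$ admitting a sequence $x_0=x,x_1,\dots$ in $A$ with $f(x_n)=x_{n-1}$ for all $n\ge1$. $\underline n=(\mathbb Z_n,k\mapsto k+1\bmod n)$; $\widehat n$ has universe $\mathbb Z_n\cup\{(k,1):k\in\mathbb N\}$ with $f(k)=k+1\bmod n$ on $\mathbb Z_n$, $f((k,1))=(k-1,1)$ for $k>1$, $f((1,1))=0$. *)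

theory Defs
  imports "HOL-Library.FuncSet"
begin

text \<open>A monounary algebra is represented by a carrier set A and a map f
 (only its behaviour on A matters).\<close>

definition mono_alg :: "'a set \<Rightarrow> ('a \<Rightarrow> 'a) \<Rightarrow> bool" where
  "mono_alg A f \<longleftrightarrow> A \<noteq> {} \<and> f ` A \<subseteq> A"

definition mhom :: "'a set \<Rightarrow> ('a \<Rightarrow> 'a) \<Rightarrow> 'b set \<Rightarrow> ('b \<Rightarrow> 'b) \<Rightarrow> ('a \<Rightarrow> 'b) \<Rightarrow> bool" where
  "mhom A f B g h \<longleftrightarrow> h ` A \<subseteq> B \<and> (\<forall>x\<in>A. h (f x) = g (h x))"

definition misomorphic :: "'a set \<Rightarrow> ('a \<Rightarrow> 'a) \<Rightarrow> 'b set \<Rightarrow> ('b \<Rightarrow> 'b) \<Rightarrow> bool" where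
  "misomorphic A f B g \<longleftrightarrow> (\<exists>h. mhom A f B g h \<and> bij_betw h A B)"

definition mconnected :: "'a set \<Rightarrow> ('a \<Rightarrow> 'a) \<Rightarrow> bool" where
  "mconnected A f \<longleftrightarrow> (\<forall>x\<in>A. \<forall>y\<in>A. \<exists>m k. (f ^^ m) x = (f ^^ k) y)"

definition has_cycle :: "'a set \<Rightarrow> ('a \<Rightarrow> 'a) \<Rightarrow> nat \<Rightarrow> bool" where
  "has_cycle A f n \<longleftrightarrow> (\<exists>x\<in>A. (f ^^ n) x = x \<and> card ((\<lambda>k. (f ^^ k) x) ` {..<n}) = n)"

definition mretract :: "'a set \<Rightarrow> ('a \<Rightarrow> 'a) \<Rightarrow> 'a set \<Rightarrow> bool" where
  "mretract A f M \<longleftrightarrow> M \<noteq> {} \<and> M \<subseteq> A \<and> f ` M \<subseteq> M \<and>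
     (\<exists>h. mhom A f M f h \<and> (\<forall>x\<in>M. h x = x))"

definition inf_part :: "'a set \<Rightarrow> ('a \<Rightarrow> 'a) \<Rightarrow> 'a set" where
  "inf_part A f = {x\<in>A. \<exists>s::nat \<Rightarrow> 'a. s 0 = x \<and> (\<forall>k. s k \<in> A) \<and> (\<forall>k\<ge>1. f (s k) = s (k - 1))}"

definition pow_carrier :: "'i set \<Rightarrow> 'b set \<Rightarrow> ('i \<Rightarrow> 'b) set" where
  "pow_carrier I B = PiE I (\<lambda>_. B)"

definition pow_fun :: "'i set \<Rightarrow> ('b \<Rightarrow> 'b) \<Rightarrow> ('i \<Rightarrow> 'b) \<Rightarrow> ('i \<Rightarrow> 'b)" where
  "pow_fun I g x = (\<lambda>i\<in>I. g (x i))"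

text \<open>The index set may be taken inside the type 'x => 'b
 (the hom-set Hom(X,B) suffices as index set).\<close>
definition in_rV :: "'x set \<Rightarrow> ('x \<Rightarrow> 'x) \<Rightarrow> 'b set \<Rightarrow> ('b \<Rightarrow> 'b) \<Rightarrow> bool" where
  "in_rV X fX B g \<longleftrightarrow> (\<exists>(I :: ('x \<Rightarrow> 'b) set) M.
      mretract (pow_carrier I B) (pow_fun I g) M \<and> misomorphic M (pow_fun I g) X fX)"

text \<open>V(A) = V(B) iff each generator lies in the other retract variety.\<close>
definition same_rV :: "'a set \<Rightarrow> ('a \<Rightarrow> 'a) \<Rightarrow> 'b set \<Rightarrow> ('b \<Rightarrow> 'b) \<Rightarrow> bool" where
  "same_rV A f B g \<longleftrightarrow> in_rV A f B g \<and> in_rV B g A f"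

definition cyc_carrier :: "nat \<Rightarrow> nat set" where "cyc_carrier n = {..<n}"
definition cyc_fun :: "nat \<Rightarrow> nat \<Rightarrow> nat" where "cyc_fun n k = (Suc k) mod n"

text \<open>hat n: Inl k represents k in Z_n, Inr k (k >= 1) represents (k,1).\<close>
definition hat_carrier :: "nat \<Rightarrow> (nat + nat) set" where
  "hat_carrier n = Inl ` {..<n} \<union> Inr ` {1..}"
fun hat_fun :: "nat \<Rightarrow> nat + nat \<Rightarrow> nat + nat" where
  "hat_fun n (Inl k) = Inl (Suc k mod n)"
| "hat_fun n (Inr k) = (if k > 1 then Inr (k - 1) else Inl 0)"

end

theory Submission
  imports Defs "HOL-Number_Theory.Cong"
begin

text \<open>Both inclusions come from one retraction principle: if every element of X has an
  fX-preimage, X embeds into a power of B, and some homomorphism B \<rightarrow> X exists, then X is a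
  retract of that power (points of the power whose orbit reaches X are pulled back along
  preimages, the others are sent through B \<rightarrow> X). A^(\<infinity>) = A provides the preimages in A.

  A embeds into a power of hat n: the phase map onto the n-cycle separates the points of the
  cycle, and for each w off the cycle there is a homomorphism A \<rightarrow> hat n sending exactly w to
  (1,1). Conversely, as A is not the bare cycle, some b off the cycle has f b on it; a backward
  orbit of b together with the cycle is a copy of hat n inside A. Homomorphisms in the other
  direction exist because hat n retracts onto its cycle and A maps onto its cycle by the phase.\<close>

section \<open>Retracts of direct powers\<close>

lemma mhom_comp: "mhom A f B g h \<Longrightarrow> mhom B g C k h' \<Longrightarrow> mhom A f C k (h' \<circ> h)"
  unfolding mhom_def by auto

lemma Least_funpow_Suc_shift:
  assumes "\<exists>s. P ((F ^^ s) z)" "(LEAST s. P ((F ^^ s) z)) = Suc t"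
  shows "(LEAST s. P ((F ^^ s) (F z))) = t"
proof (rule Least_equality)
  show "P ((F ^^ t) (F z))" using LeastI_ex[OF assms(1)] assms(2) by (simp add: funpow_swap1)
  show "t \<le> s" if "P ((F ^^ s) (F z))" for s
    using that not_less_Least[of "Suc s" "\<lambda>s. P ((F ^^ s) z)"] assms(2)
    by (fastforce simp: funpow_swap1)
qed

context
  fixes X :: "'x set" and fX :: "'x \<Rightarrow> 'x" and P :: "'p set" and F :: "'p \<Rightarrow> 'p"
    and e :: "'x \<Rightarrow> 'p" and q :: "'p \<Rightarrow> 'x"
  assumes onto: "fX ` X = X" and e_hom: "mhom X fX P F e" and e_inj: "inj_on e X"
    and q_hom: "mhom P F X fX q"
begin

definition entry_time :: "'p \<Rightarrow> nat" where
  "entry_time z = (LEAST t. (F ^^ t) z \<in> e ` X)"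

definition orbit_pullback :: "'p \<Rightarrow> 'x" where
  "orbit_pullback z = (if \<exists>t. (F ^^ t) z \<in> e ` X
     then (inv_into X fX ^^ entry_time z) (inv_into X e ((F ^^ entry_time z) z))
     else q z)"

lemma entry_time_in_image: "\<exists>t. (F ^^ t) z \<in> e ` X \<Longrightarrow> (F ^^ entry_time z) z \<in> e ` X"
  unfolding entry_time_def by (rule LeastI_ex)

lemma preimage_in: "a \<in> X \<Longrightarrow> inv_into X fX a \<in> X \<and> fX (inv_into X fX a) = a"
  using onto by (simp add: inv_into_into f_inv_into_f)

lemma funpow_preimage_in: "a \<in> X \<Longrightarrow> (inv_into X fX ^^ t) a \<in> X"
  by (induction t) (simp_all add: preimage_in)

lemma orbit_pullback_in: "z \<in> P \<Longrightarrow> orbit_pullback z \<in> X"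
  using q_hom entry_time_in_image[THEN inv_into_into, THEN funpow_preimage_in]
  unfolding orbit_pullback_def mhom_def by auto

lemma orbit_pullback_embedding:
  assumes "x \<in> X" shows "orbit_pullback (e x) = x"
proof -
  have "(F ^^ 0) (e x) \<in> e ` X" using assms by simp
  then have "\<exists>t. (F ^^ t) (e x) \<in> e ` X" "entry_time (e x) = 0"
    unfolding entry_time_def by (blast, rule Least_eq_0)
  then show ?thesis using assms e_inj unfolding orbit_pullback_def by simp
qed

lemma orbit_pullback_step:
  assumes "z \<in> P" shows "orbit_pullback (F z) = fX (orbit_pullback z)"
proof (cases "\<exists>t. (F ^^ t) z \<in> e ` X")
  case True
  show ?thesis
  proof (cases "entry_time z")
    case 0
    then obtain x where x: "x \<in> X" "z = e x" using entry_time_in_image[OF True] by auto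
    then have "F z = e (fX x)" "fX x \<in> X" using onto e_hom unfolding mhom_def by auto
    then show ?thesis using orbit_pullback_embedding x by simp
  next
    case (Suc t)
    have in_image: "(F ^^ t) (F z) \<in> e ` X"
      using entry_time_in_image[OF True] Suc by (simp add: funpow_swap1)
    have "entry_time (F z) = t"
      using True Suc unfolding entry_time_def by (rule Least_funpow_Suc_shift)
    define a where "a = inv_into X e ((F ^^ t) (F z))"
    have "orbit_pullback (F z) = (inv_into X fX ^^ t) a"
      using in_image \<open>entry_time (F z) = t\<close> unfolding orbit_pullback_def a_def by auto
    moreover have "orbit_pullback z = inv_into X fX ((inv_into X fX ^^ t) a)"
      using True Suc unfolding orbit_pullback_def a_def by (simp add: funpow_swap1)
    moreover have "(inv_into X fX ^^ t) a \<in> X"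
      using in_image unfolding a_def by (blast intro: inv_into_into funpow_preimage_in)
    ultimately show ?thesis using preimage_in by simp
  qed
next
  case False
  then have "\<not> (\<exists>t. (F ^^ t) (F z) \<in> e ` X)" by (metis funpow_Suc_right comp_apply)
  with False show ?thesis using q_hom assms unfolding orbit_pullback_def mhom_def by auto
qed

lemma mhom_orbit_pullback: "mhom P F X fX orbit_pullback"
  unfolding mhom_def using orbit_pullback_in orbit_pullback_step by auto

end

lemma retract_if_left_inverse_hom:
  assumes "X \<noteq> {}" "fX ` X \<subseteq> X"
    and e: "mhom X fX P F e" and r: "mhom P F X fX r" and r_e: "\<And>x. x \<in> X \<Longrightarrow> r (e x) = x"
  shows "mretract P F (e ` X)" and "misomorphic (e ` X) F X fX"
proof -
  have eF: "F (e x) = e (fX x)" if "x \<in> X" for x using e that unfolding mhom_def by auto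
  have "mhom P F (e ` X) F (e \<circ> r)"
    using e r unfolding mhom_def by auto
  moreover have "e ` X \<subseteq> P" "F ` e ` X \<subseteq> e ` X"
    using e eF assms(2) unfolding mhom_def by auto
  ultimately show "mretract P F (e ` X)"
    unfolding mretract_def using assms(1) r_e by auto
  have "bij_betw r (e ` X) X"
    by (rule bij_betw_byWitness[where f' = e]) (use r_e e r in \<open>auto simp: mhom_def\<close>)
  moreover have "mhom (e ` X) F X fX r"
    using r \<open>e ` X \<subseteq> P\<close> unfolding mhom_def by auto
  ultimately show "misomorphic (e ` X) F X fX"
    unfolding misomorphic_def by blast
qed

lemma in_rV_if_separating_homs:
  fixes I :: "('x \<Rightarrow> 'b) set"
  assumes "X \<noteq> {}" and onto: "fX ` X = X"
    and homs: "\<And>h. h \<in> I \<Longrightarrow> mhom X fX B g h"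
    and separating: "\<And>x y. x \<in> X \<Longrightarrow> y \<in> X \<Longrightarrow> x \<noteq> y \<Longrightarrow> \<exists>h\<in>I. h x \<noteq> h y"
    and "i \<in> I" and q: "mhom B g X fX q"
  shows "in_rV X fX B g"
proof -
  define e where "e x = (\<lambda>h\<in>I. h x)" for x
  have "h x \<in> B" "h (fX x) = g (h x)" if "h \<in> I" "x \<in> X" for h x
    using homs[OF that(1)] that(2) unfolding mhom_def by auto
  then have e_hom: "mhom X fX (pow_carrier I B) (pow_fun I g) e"
    unfolding mhom_def pow_carrier_def pow_fun_def e_def by (auto intro!: restrict_ext)
  have e_inj: "inj_on e X"
  proof (rule inj_onI)
    show "x = y" if "x \<in> X" "y \<in> X" "e x = e y" for x y
      using separating[OF that(1,2)] that(3) unfolding e_def by (metis restrict_apply')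
  qed
  have q_i: "mhom (pow_carrier I B) (pow_fun I g) X fX (\<lambda>z. q (z i))"
    using q \<open>i \<in> I\<close> unfolding mhom_def pow_carrier_def pow_fun_def by auto
  define r where "r = orbit_pullback X fX (pow_fun I g) e (\<lambda>z. q (z i))"
  have r: "mhom (pow_carrier I B) (pow_fun I g) X fX r"
    unfolding r_def using onto e_hom e_inj q_i by (rule mhom_orbit_pullback)
  have r_e: "r (e x) = x" if "x \<in> X" for x
    unfolding r_def using onto e_hom e_inj q_i that by (rule orbit_pullback_embedding)
  have "fX ` X \<subseteq> X" using onto by simp
  from retract_if_left_inverse_hom[OF \<open>X \<noteq> {}\<close> this e_hom r] r_e show ?thesis
    unfolding in_rV_def by blast
qed

section \<open>The algebra hat n\<close>

lemma hat_carrier_cases: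
  assumes "u \<in> hat_carrier n"
  obtains (cycle) k where "u = Inl k" "k < n" | (tail) j where "u = Inr (Suc j)"
proof -
  consider k where "u = Inl k" "k < n" | k where "u = Inr k" "1 \<le> k"
    using assms unfolding hat_carrier_def by auto
  then show thesis
  proof cases
    case (2 k)
    then show thesis using tail[of "k - 1"] by simp
  qed (fact cycle)
qed

lemma hat_fun_onto:
  assumes "0 < n" shows "hat_fun n ` hat_carrier n = hat_carrier n"
proof
  show "hat_fun n ` hat_carrier n \<subseteq> hat_carrier n"
    using assms by (auto simp: hat_carrier_def)
  show "hat_carrier n \<subseteq> hat_fun n ` hat_carrier n"
  proof
    fix u assume u: "u \<in> hat_carrier n"
    then show "u \<in> hat_fun n ` hat_carrier n"
    proof (cases rule: hat_carrier_cases)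
      case (cycle k)
      show ?thesis
      proof (cases k)
        case 0
        then have "u = hat_fun n (Inr 1)" using cycle by simp
        then show ?thesis by (rule image_eqI) (simp add: hat_carrier_def)
      next
        case (Suc j)
        then have "u = hat_fun n (Inl j)" using cycle by simp
        then show ?thesis by (rule image_eqI) (use Suc cycle in \<open>simp add: hat_carrier_def\<close>)
      qed
    next
      case (tail j)
      then have "u = hat_fun n (Inr (Suc (Suc j)))" by simp
      then show ?thesis by (rule image_eqI) (simp add: hat_carrier_def)
    qed
  qed
qed

lemma mhom_cyc_Inl_hat: "mhom (cyc_carrier n) (cyc_fun n) (hat_carrier n) (hat_fun n) Inl"
  unfolding mhom_def cyc_carrier_def cyc_fun_def hat_carrier_def by auto

text \<open>Since (n - 1) * k is -k modulo n, this sends (k,1) to -k, retracting hat n onto its cycle.\<close>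
definition hat_to_cyc :: "nat \<Rightarrow> nat + nat \<Rightarrow> nat" where
  "hat_to_cyc n = case_sum id (\<lambda>k. (n - 1) * k mod n)"

lemma mhom_hat_to_cyc:
  assumes "0 < n"
  shows "mhom (hat_carrier n) (hat_fun n) (cyc_carrier n) (cyc_fun n) (hat_to_cyc n)"
  unfolding mhom_def
proof (intro conjI ballI)
  show "hat_to_cyc n ` hat_carrier n \<subseteq> cyc_carrier n"
    using assms by (auto simp: hat_carrier_def hat_to_cyc_def cyc_carrier_def)
  fix u assume "u \<in> hat_carrier n"
  then show "hat_to_cyc n (hat_fun n u) = cyc_fun n (hat_to_cyc n u)"
  proof (cases rule: hat_carrier_cases)
    case (tail j)
    have "Suc ((n - 1) * Suc j) = (n - 1) * j + n" using assms by simp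
    then have "Suc ((n - 1) * Suc j mod n) mod n = (n - 1) * j mod n"
      by (simp add: mod_Suc_eq)
    then show ?thesis
      using tail by (auto simp: hat_to_cyc_def cyc_fun_def)
  qed (simp add: hat_to_cyc_def cyc_fun_def)
qed

section \<open>Connected algebras containing a cycle\<close>

lemma funpow_period_mult: "(f ^^ p) x = x \<Longrightarrow> (f ^^ (p * q)) x = x"
  by (induction q) (simp_all add: funpow_add)

lemma inf_part_backward_orbit:
  assumes "x \<in> inf_part A f"
  obtains s where "s 0 = x" "\<And>k. s k \<in> A" "\<And>k. f (s (Suc k)) = s k"
proof -
  obtain s :: "nat \<Rightarrow> 'a" where s: "s 0 = x" "\<forall>k. s k \<in> A" "\<forall>k\<ge>1. f (s k) = s (k - 1)"
    using assms unfolding inf_part_def by (simp only: mem_Collect_eq) blast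
  then show thesis by (intro that[of s]) auto
qed

lemma onto_if_inf_part_eq:
  assumes "inf_part A f = A" "f ` A \<subseteq> A" shows "f ` A = A"
proof
  show "A \<subseteq> f ` A"
  proof
    fix x assume "x \<in> A"
    then obtain s where "s 0 = x" "\<And>k. s k \<in> A" "\<And>k. f (s (Suc k)) = s k"
      using assms(1) inf_part_backward_orbit by metis
    then show "x \<in> f ` A" by (metis image_eqI)
  qed
qed (fact assms(2))

locale connected_with_cycle =
  fixes A :: "'a set" and f :: "'a \<Rightarrow> 'a" and n :: nat and c :: 'a
  assumes n_pos: "0 < n"
    and closed: "f ` A \<subseteq> A"
    and c_in_A: "c \<in> A"
    and cycle_period: "(f ^^ n) c = c"
    and cycle_distinct: "inj_on (\<lambda>k. (f ^^ k) c) {..<n}"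
    and connected: "x \<in> A \<Longrightarrow> \<exists>m k. (f ^^ m) x = (f ^^ k) c"
begin

definition cyc :: "nat \<Rightarrow> 'a" where "cyc k = (f ^^ k) c"

definition cycle :: "'a set" where "cycle = range cyc"

lemma funpow_in_A: "x \<in> A \<Longrightarrow> (f ^^ k) x \<in> A"
  using closed by (induction k) auto

lemma cyc_in_A: "cyc k \<in> A"
  unfolding cyc_def using c_in_A by (rule funpow_in_A)

lemma f_cyc: "f (cyc k) = cyc (Suc k)"
  by (simp add: cyc_def)

lemma funpow_cyc: "(f ^^ m) (cyc k) = cyc (m + k)"
  by (simp add: cyc_def funpow_add)

lemma cyc_mod: "cyc (k mod n) = cyc k"
proof -
  have "cyc k = (f ^^ (k mod n + n * (k div n))) c" by (simp add: cyc_def)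
  also have "\<dots> = (f ^^ (k mod n)) ((f ^^ (n * (k div n))) c)"
    by (simp only: funpow_add comp_apply)
  also have "\<dots> = cyc (k mod n)" by (simp add: cyc_def funpow_period_mult[OF cycle_period])
  finally show ?thesis ..
qed

lemma cyc_eq_iff: "cyc a = cyc b \<longleftrightarrow> a mod n = b mod n"
proof
  assume "cyc a = cyc b"
  then have "cyc (a mod n) = cyc (b mod n)" by (simp add: cyc_mod)
  then show "a mod n = b mod n"
    using inj_onD[OF cycle_distinct] n_pos unfolding cyc_def by simp
qed (metis cyc_mod)

lemma cyc_add_right_eq_iff: "cyc (a + j) = cyc (b + j) \<longleftrightarrow> a mod n = b mod n"
proof -
  have "cyc (a + j) = cyc (b + j) \<longleftrightarrow> [a + j = b + j] (mod n)" by (simp add: cyc_eq_iff cong_def)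
  also have "\<dots> \<longleftrightarrow> [a = b] (mod n)" by (rule cong_add_rcancel_nat)
  finally show ?thesis by (simp add: cong_def)
qed

lemma cyc_in_cycle: "cyc k \<in> cycle"
  by (simp add: cycle_def)

lemma funpow_in_cycle: "x \<in> cycle \<Longrightarrow> (f ^^ k) x \<in> cycle"
  unfolding cycle_def using funpow_cyc by auto

lemma periodic_in_cycle:
  assumes "w \<in> A" "(f ^^ p) w = w" "0 < p"
  shows "w \<in> cycle"
proof -
  obtain m k where mk: "(f ^^ m) w = cyc k" using connected[OF assms(1)] cyc_def by auto
  have "m \<le> p * m" using assms(3) by simp
  then have "w = (f ^^ (p * m - m + m)) w" by (simp add: funpow_period_mult[OF assms(2)])
  also have "\<dots> = (f ^^ (p * m - m)) (cyc k)" by (simp only: funpow_add comp_apply mk)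
  finally have "w = cyc (p * m - m + k)" by (simp add: funpow_cyc)
  then show ?thesis unfolding cycle_def by blast
qed

text \<open>The position x would have on the cycle if it had always been on it.\<close>
definition phase :: "'a \<Rightarrow> nat" where
  "phase x = (SOME p. p < n \<and> (\<exists>m. (f ^^ m) x = cyc (p + m)))"

lemma phase_witness_unique:
  assumes "(f ^^ m) x = cyc (p + m)" "(f ^^ m') x = cyc (p' + m')" "p < n" "p' < n"
  shows "p = p'"
proof -
  have "p mod n = p' mod n" if "(f ^^ m) x = cyc (p + m)" "(f ^^ m') x = cyc (p' + m')" "m \<le> m'"
    for p p' m m'
  proof -
    have "(f ^^ m') x = (f ^^ (m' - m)) ((f ^^ m) x)"
      using that(3) by (metis funpow_add comp_apply le_add_diff_inverse2)
    then have "cyc (p' + m') = (f ^^ (m' - m)) ((f ^^ m) x)" using that(2) by simp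
    also have "\<dots> = cyc (p + m')" using that by (simp add: funpow_cyc add.commute)
    finally show ?thesis by (simp add: cyc_add_right_eq_iff)
  qed
  then show ?thesis using assms by (metis le_cases mod_less)
qed

lemma phase_witness_exists:
  assumes "x \<in> A" shows "\<exists>p<n. \<exists>m. (f ^^ m) x = cyc (p + m)"
proof -
  obtain m k where mk: "(f ^^ m) x = cyc k" using connected[OF assms] cyc_def by auto
  define p where "p = (k + n * m - m) mod n"
  have "m \<le> n * m" using n_pos by simp
  then have "k + n * m - m + m = k + n * m" by linarith
  then have "(p + m) mod n = (k + n * m) mod n"
    unfolding p_def by (metis mod_add_left_eq)
  then have "cyc (p + m) = cyc k" by (simp add: cyc_eq_iff)
  moreover have "p < n" unfolding p_def using n_pos by simp
  ultimately show ?thesis using mk by metis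
qed

lemma phase_spec: "x \<in> A \<Longrightarrow> phase x < n \<and> (\<exists>m. (f ^^ m) x = cyc (phase x + m))"
  unfolding phase_def by (rule someI_ex) (rule phase_witness_exists)

lemma phase_eqI:
  assumes "(f ^^ m) x = cyc (p + m)" "p < n" shows "phase x = p"
proof -
  have "\<exists>p. p < n \<and> (\<exists>m. (f ^^ m) x = cyc (p + m))" using assms by blast
  then have "phase x < n \<and> (\<exists>m. (f ^^ m) x = cyc (phase x + m))"
    unfolding phase_def by (rule someI_ex)
  then show ?thesis using phase_witness_unique assms by blast
qed

lemma phase_cyc: "phase (cyc k) = k mod n"
  by (rule phase_eqI[where m = 0]) (simp_all add: cyc_mod n_pos)

lemma phase_f:
  assumes "x \<in> A" shows "phase (f x) = Suc (phase x) mod n"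
proof -
  obtain m where m: "(f ^^ m) x = cyc (phase x + m)" using phase_spec[OF assms] by blast
  have "(f ^^ m) (f x) = cyc (Suc (phase x + m))"
    using m by (simp add: f_cyc flip: funpow_swap1)
  also have "\<dots> = cyc (Suc (phase x) mod n + m)"
    by (simp add: cyc_eq_iff mod_add_left_eq)
  finally show ?thesis by (rule phase_eqI) (simp add: n_pos)
qed

lemma mhom_phase: "mhom A f (cyc_carrier n) (cyc_fun n) phase"
  unfolding mhom_def cyc_carrier_def cyc_fun_def using phase_spec phase_f by auto

lemma mhom_cyc: "mhom (cyc_carrier n) (cyc_fun n) A f cyc"
  unfolding mhom_def cyc_fun_def using cyc_in_A f_cyc by (auto simp: cyc_mod)

lemma misomorphic_if_subset_cycle:
  assumes "A \<subseteq> cycle" shows "misomorphic A f (cyc_carrier n) (cyc_fun n)"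
  unfolding misomorphic_def
proof (intro exI conjI)
  show "mhom A f (cyc_carrier n) (cyc_fun n) phase" by (rule mhom_phase)
  have "inj_on phase A"
  proof (rule inj_onI)
    fix x y assume "x \<in> A" "y \<in> A" "phase x = phase y"
    moreover obtain a b where "x = cyc a" "y = cyc b"
      using assms \<open>x \<in> A\<close> \<open>y \<in> A\<close> unfolding cycle_def by blast
    ultimately show "x = y" by (simp add: phase_cyc cyc_eq_iff)
  qed
  moreover have "phase ` A = cyc_carrier n"
  proof
    show "phase ` A \<subseteq> cyc_carrier n" using phase_spec by (auto simp: cyc_carrier_def)
    show "cyc_carrier n \<subseteq> phase ` A"
    proof
      fix k assume "k \<in> cyc_carrier n"
      then have "k = phase (cyc k)" by (simp add: phase_cyc cyc_carrier_def)
      then show "k \<in> phase ` A" using cyc_in_A by blast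
    qed
  qed
  ultimately show "bij_betw phase A (cyc_carrier n)" by (simp add: bij_betw_def)
qed

text \<open>For w off the cycle, to_hat w sends w to the top point (1,1) of hat n, the elements
  reaching w in t steps to (t+1,1), and all other elements to the cycle, rotated so that
  f w goes to 0.\<close>
definition to_hat :: "'a \<Rightarrow> 'a \<Rightarrow> nat + nat" where
  "to_hat w y = (if \<exists>t. (f ^^ t) y = w then Inr (Suc (LEAST t. (f ^^ t) y = w))
     else Inl ((phase y + (n - phase (f w))) mod n))"

lemma steps_to_off_cycle_unique:
  assumes "w \<in> A" "w \<notin> cycle" "(f ^^ t) y = w" "(f ^^ t') y = w"
  shows "t = t'"
proof -
  have False if "(f ^^ a) y = w" "(f ^^ b) y = w" "a < b" for a b
  proof -
    have "(f ^^ (b - a)) w = (f ^^ (b - a + a)) y" using that(1) by (simp add: funpow_add)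
    then have "(f ^^ (b - a)) w = w" using that by simp
    then show False using periodic_in_cycle assms(1,2) that(3) by simp
  qed
  then show ?thesis using assms(3,4) by (metis linorder_neqE_nat)
qed

lemma to_hat_Inr:
  assumes "w \<in> A" "w \<notin> cycle" "(f ^^ t) y = w"
  shows "to_hat w y = Inr (Suc t)"
proof -
  have "(LEAST t. (f ^^ t) y = w) = t"
    using assms steps_to_off_cycle_unique by (blast intro: Least_equality eq_imp_le)
  then show ?thesis using assms(3) unfolding to_hat_def by auto
qed

lemma to_hat_eq_top_iff:
  assumes "w \<in> A" "w \<notin> cycle"
  shows "to_hat w y = Inr 1 \<longleftrightarrow> y = w"
proof
  assume "to_hat w y = Inr 1"
  then obtain t where "(f ^^ t) y = w" unfolding to_hat_def by (auto split: if_splits)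
  with \<open>to_hat w y = Inr 1\<close> show "y = w" using to_hat_Inr[OF assms] by fastforce
qed (use to_hat_Inr[OF assms, of 0] in simp)

lemma mhom_to_hat:
  assumes "w \<in> A" "w \<notin> cycle"
  shows "mhom A f (hat_carrier n) (hat_fun n) (to_hat w)"
  unfolding mhom_def
proof (intro conjI ballI)
  show "to_hat w ` A \<subseteq> hat_carrier n"
    using n_pos by (auto simp: to_hat_def hat_carrier_def)
  fix y assume "y \<in> A"
  show "to_hat w (f y) = hat_fun n (to_hat w y)"
  proof (cases "\<exists>t. (f ^^ t) y = w")
    case True
    then obtain t where t: "(f ^^ t) y = w" by blast
    show ?thesis
    proof (cases t)
      case 0
      have "\<not> (\<exists>s. (f ^^ s) (f w) = w)"
        using periodic_in_cycle[of w "Suc _"] assms by (auto simp: funpow_swap1)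
      moreover have "phase (f w) < n" using phase_spec closed assms(1) by blast
      ultimately show ?thesis using t 0 to_hat_Inr[OF assms, of 0 w] by (simp add: to_hat_def)
    next
      case (Suc s)
      then have "to_hat w (f y) = Inr (Suc s)"
        using t to_hat_Inr[OF assms] by (simp add: funpow_swap1)
      moreover have "to_hat w y = Inr (Suc (Suc s))" using to_hat_Inr[OF assms t] Suc by simp
      ultimately show ?thesis by simp
    qed
  next
    case False
    then have "\<not> (\<exists>t. (f ^^ t) (f y) = w)" by (metis funpow_Suc_right comp_apply)
    with False show ?thesis
      using \<open>y \<in> A\<close> by (simp add: to_hat_def phase_f mod_Suc_eq mod_add_left_eq)
  qed
qed

lemma to_hat_separates:
  assumes "x \<in> A" "y \<in> A" "x \<noteq> y"
  shows "\<exists>h \<in> insert (Inl \<circ> phase) (to_hat ` (A - cycle)). h x \<noteq> h y"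
proof (cases "x \<in> cycle \<and> y \<in> cycle")
  case True
  then obtain a b where "x = cyc a" "y = cyc b" unfolding cycle_def by blast
  then have "phase x \<noteq> phase y" using assms(3) by (simp add: phase_cyc cyc_eq_iff)
  then show ?thesis by auto
next
  case False
  then show ?thesis
    using assms to_hat_eq_top_iff by (metis DiffI image_eqI insertCI)
qed

lemma exists_entry_into_cycle:
  assumes "a \<in> A" "a \<notin> cycle"
  shows "\<exists>b\<in>A. b \<notin> cycle \<and> f b \<in> cycle"
proof -
  obtain m k where "(f ^^ m) a = cyc k" using connected[OF assms(1)] cyc_def by auto
  then have "(f ^^ m) a \<in> cycle" by (simp add: cycle_def)
  then show ?thesis using assms
  proof (induction m arbitrary: a)
    case (Suc m)
    then show ?case using closed by (cases "f a \<in> cycle") (auto simp: funpow_swap1)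
  qed simp
qed

lemma backward_orbit_off_cycle:
  assumes "s 0 \<notin> cycle" "\<And>k. s k \<in> A" "\<And>k. f (s (Suc k)) = s k"
  shows "s k \<notin> cycle" and "inj s"
proof -
  have descend: "(f ^^ d) (s (i + d)) = s i" for i d
    by (induction d) (simp_all add: assms(3) funpow_swap1)
  show off: "s k \<notin> cycle" for k
  proof
    assume "s k \<in> cycle"
    then have "(f ^^ k) (s (0 + k)) \<in> cycle" using funpow_in_cycle by simp
    then show False using descend assms(1) by metis
  qed
  have False if "s i = s j" "i < j" for i j
  proof -
    have "(f ^^ (j - i)) (s i) = s i" using descend[of "j - i" i] that by simp
    then show False using periodic_in_cycle[of "s i" "j - i"] off assms(2) that(2) by simp
  qed
  then show "inj s" by (metis injI linorder_neqE_nat)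
qed

lemma hat_embedding:
  assumes "inf_part A f = A" "\<not> A \<subseteq> cycle"
  obtains e where "mhom (hat_carrier n) (hat_fun n) A f e" "inj_on e (hat_carrier n)"
proof -
  obtain b where b: "b \<in> A" "b \<notin> cycle" "f b \<in> cycle"
    using assms(2) exists_entry_into_cycle by blast
  then obtain j where j: "f b = cyc j" unfolding cycle_def by blast
  obtain s where s: "s 0 = b" "\<And>k. s k \<in> A" "\<And>k. f (s (Suc k)) = s k"
    using assms(1) b(1) inf_part_backward_orbit by metis
  note s_off = backward_orbit_off_cycle[of s, unfolded s(1), OF b(2) s(2,3)]
  define e where "e = case_sum (\<lambda>k. cyc (k + j)) (\<lambda>k. s (k - 1))"
  have "mhom (hat_carrier n) (hat_fun n) A f e"
    unfolding mhom_def
  proof (intro conjI ballI)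
    show "e ` hat_carrier n \<subseteq> A" using cyc_in_A s(2) by (auto simp: e_def split: sum.split)
    fix u assume "u \<in> hat_carrier n"
    then show "e (hat_fun n u) = f (e u)"
    proof (cases rule: hat_carrier_cases)
      case (cycle k)
      have "cyc (Suc k mod n + j) = cyc (Suc (k + j))" by (simp add: cyc_eq_iff mod_add_left_eq)
      then show ?thesis using cycle by (simp add: e_def f_cyc)
    next
      case (tail i)
      then show ?thesis using s j by (cases i) (simp_all add: e_def)
    qed
  qed
  moreover have "inj_on e (hat_carrier n)"
  proof (rule inj_onI)
    fix u v assume "u \<in> hat_carrier n" "v \<in> hat_carrier n" and e_eq: "e u = e v"
    then show "u = v"
    proof (cases rule: hat_carrier_cases[case_product hat_carrier_cases])
      case (cycle_cycle k l)
      then show ?thesis using e_eq by (simp add: e_def cyc_add_right_eq_iff)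
    next
      case (tail_tail i i')
      then show ?thesis using e_eq s_off(2) by (simp add: e_def inj_eq)
    qed (use e_eq s_off(1) cyc_in_cycle in \<open>simp add: e_def; metis\<close>)+
  qed
  ultimately show thesis by (rule that)
qed

end

theorem lemma4p2:
  fixes A :: "'a set" and f :: "'a \<Rightarrow> 'a" and n :: nat
  assumes "n \<ge> 1"
    and "mono_alg A f"
    and "mconnected A f"
    and "has_cycle A f n"
    and "\<not> misomorphic A f (cyc_carrier n) (cyc_fun n)"
    and "inf_part A f = A"
  shows "same_rV A f (hat_carrier n) (hat_fun n)"
proof -
  have "A \<noteq> {}" and closed: "f ` A \<subseteq> A" using assms(2) unfolding mono_alg_def by auto
  obtain c where c: "c \<in> A" "(f ^^ n) c = c" "card ((\<lambda>k. (f ^^ k) c) ` {..<n}) = n"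
    using assms(4) unfolding has_cycle_def by blast
  interpret connected_with_cycle A f n c
    using assms(1,3) closed c by unfold_locales (auto simp: mconnected_def inj_on_iff_eq_card)
  have onto: "f ` A = A" using onto_if_inf_part_eq[OF assms(6) closed] .
  have off_cycle: "\<not> A \<subseteq> cycle" using misomorphic_if_subset_cycle assms(5) by blast
  have "in_rV A f (hat_carrier n) (hat_fun n)"
  proof (rule in_rV_if_separating_homs[OF \<open>A \<noteq> {}\<close> onto _ to_hat_separates insertI1])
    show "mhom A f (hat_carrier n) (hat_fun n) h"
      if "h \<in> insert (Inl \<circ> phase) (to_hat ` (A - cycle))" for h
      using that mhom_comp[OF mhom_phase mhom_cyc_Inl_hat] mhom_to_hat by auto
    show "mhom (hat_carrier n) (hat_fun n) A f (cyc \<circ> hat_to_cyc n)"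
      using mhom_comp[OF mhom_hat_to_cyc mhom_cyc] n_pos .
  qed
  moreover obtain e where e: "mhom (hat_carrier n) (hat_fun n) A f e" "inj_on e (hat_carrier n)"
    using hat_embedding[OF assms(6) off_cycle] .
  have "in_rV (hat_carrier n) (hat_fun n) A f"
  proof (rule in_rV_if_separating_homs[where I = "{e}"])
    show "hat_carrier n \<noteq> {}" "hat_fun n ` hat_carrier n = hat_carrier n"
      using hat_fun_onto n_pos by (auto simp: hat_carrier_def)
    show "mhom A f (hat_carrier n) (hat_fun n) (Inl \<circ> phase)"
      by (rule mhom_comp[OF mhom_phase mhom_cyc_Inl_hat])
  qed (use e in \<open>auto dest: inj_onD\<close>)
  ultimately show ?thesis unfolding same_rV_def by blast
qed

end
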